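(* Let $U\subset\mathbb{R}^m$ be a bounded domain and $f\in W^{1,1}(U,\mathbb{R}^n)$. Suppose $$\inf_{\{f_j\}}\int_U\Big(\sup_j|\Lambda^kf_j|\Big)\,dx<\infty,$$ where the infimum is over all sequences $\{f_j\}\subset C^1(U,\mathbb{R}^n)$ with $\|f_j-f\|_{W^{1,1}(U)}\to0$. Then $f\in\mathcal{S}^k(U,\mathbb{R}^n)$.
   Context: For $f\in W^{1,1}(U,\mathbb{R}^n)$, $|\Lambda^kf|(x)$ is the maximum of the absolute values of all $k\times k$ minors of the Jacobian matrix $Df(x)=(\partial f_\nu/\partial x_\mu)$ ($0$ if $k>\min(m,n)$). For $\alpha=\sum_{i_1<\dots<i_k}a_{i_1\dots i_k}(y)\,dy_{i_1}\wedge\dots\wedge dy_{i_k}$ on $\mathbb{R}^n$, $f^*\alpha=\sum a_{i_1\dots i_k}(f(x))\,df_{i_1}\wedge\dots\wedge df_{i_k}$, $df_\nu=\sum_\mu\frac{\partial f_\nu}{\partial x_\mu}dx_\mu$. $C^1_b(\mathbb{R}^n,\Lambda^k)$: $C^1$ $k$-forms on $\mathbb{R}^n$ with bounded coefficients and bounded first derivatives of coefficients; $C^1_0(U,\Lambda^j)$: $C^1$ forms on $U$ with compactly supported coefficients. $\mathcal{F}^k(U,\mathbb{R}^n)=\{f\in W^{1,1}(U,\mathbb{R}^n): |\Lambda^kf|\in L^1(U)\}$. A sequence $f_j\in\mathcal{F}^k$ converges to $f\in\mathcal{F}^k$ in the $\tau^k$ topology if $f_j\to f$ in $W^{1,1}$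 and $\int_Uf_j^*\alpha\wedge\omega\to\int_Uf^*\alpha\wedge\omega$ for all $\alpha\in C^1_b(\mathbb{R}^n,\Lambda^k)$, $\omega\in C^1_0(U,\Lambda^{m-k})$. A map $f$ is $k$-stable, written $f\in\mathcal{S}^k(U,\mathbb{R}^n)$, if $f\in\mathcal{F}^k(U,\mathbb{R}^n)$ and there is a sequence $f_j\in C^1(U,\mathbb{R}^n)\cap\mathcal{F}^k(U,\mathbb{R}^n)$ converging to $f$ in the $\tau^k$ topology. *)

theory Defs
  imports "HOL-Analysis.Analysis"
begin

definition pd :: "'m::{finite,linorder} \<Rightarrow> (real^'m::{finite,linorder} \<Rightarrow> 'b::real_normed_vector) \<Rightarrow> real^'m::{finite,linorder} \<Rightarrow> 'b" where
  "pd i g x = frechet_derivative g (at x) (axis i 1)"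

definition C1_on :: "(real^'m::{finite,linorder}) set \<Rightarrow> (real^'m::{finite,linorder} \<Rightarrow> 'b::real_normed_vector) \<Rightarrow> bool" where
  "C1_on U g \<longleftrightarrow> (\<forall>x\<in>U. g differentiable (at x)) \<and> (\<forall>i. continuous_on U (pd i g))"

fun iter_pd :: "'m::{finite,linorder} list \<Rightarrow> (real^'m::{finite,linorder} \<Rightarrow> real) \<Rightarrow> real^'m::{finite,linorder} \<Rightarrow> real" where
  "iter_pd [] g = g"
| "iter_pd (i # ds) g = pd i (iter_pd ds g)"

definition smooth_on :: "(real^'m::{finite,linorder}) set \<Rightarrow> (real^'m::{finite,linorder} \<Rightarrow> real) \<Rightarrow> bool" where
  "smooth_on U g \<longleftrightarrow> (\<forall>ds. (\<forall>x\<in>U. iter_pd ds g differentiable (at x)) \<and> continuous_on U (iter_pd ds g))"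

definition compact_support_in :: "(real^'m::{finite,linorder}) set \<Rightarrow> (real^'m::{finite,linorder} \<Rightarrow> real) \<Rightarrow> bool" where
  "compact_support_in U g \<longleftrightarrow> compact (closure {x\<in>U. g x \<noteq> 0}) \<and> closure {x\<in>U. g x \<noteq> 0} \<subseteq> U"

definition test_fun :: "(real^'m::{finite,linorder}) set \<Rightarrow> (real^'m::{finite,linorder} \<Rightarrow> real) \<Rightarrow> bool" where
  "test_fun U \<phi> \<longleftrightarrow> smooth_on U \<phi> \<and> compact_support_in U \<phi>"

text \<open>Df x $ nu $ mu is the weak partial derivative of f_nu in direction x_mu.\<close>
definition W11 :: "(real^'m::{finite,linorder}) set \<Rightarrow> (real^'m::{finite,linorder} \<Rightarrow> real^'n::{finite,linorder}) \<Rightarrow> (real^'m::{finite,linorder} \<Rightarrow> real^'m::{finite,linorder}^'n::{finite,linorder}) \<Rightarrow> bool" where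
  "W11 U f Df \<longleftrightarrow> set_integrable lebesgue U f \<and> set_integrable lebesgue U Df \<and>
     (\<forall>\<phi> \<nu> \<mu>. test_fun U \<phi> \<longrightarrow>
        (LINT x:U|lebesgue. f x $ \<nu> * pd \<mu> \<phi> x) = - (LINT x:U|lebesgue. Df x $ \<nu> $ \<mu> * \<phi> x))"

definition W11_dist :: "(real^'m::{finite,linorder}) set \<Rightarrow> (real^'m::{finite,linorder} \<Rightarrow> real^'n::{finite,linorder}) \<Rightarrow> (real^'m::{finite,linorder} \<Rightarrow> real^'m::{finite,linorder}^'n::{finite,linorder})
     \<Rightarrow> (real^'m::{finite,linorder} \<Rightarrow> real^'n::{finite,linorder}) \<Rightarrow> (real^'m::{finite,linorder} \<Rightarrow> real^'m::{finite,linorder}^'n::{finite,linorder}) \<Rightarrow> real" where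
  "W11_dist U f Df g Dg = (LINT x:U|lebesgue. norm (f x - g x)) + (LINT x:U|lebesgue. norm (Df x - Dg x))"

text \<open>The minor of A with rows I and columns J (both listed increasingly), card I = card J.\<close>
definition minor :: "real^'m::{finite,linorder}^'n::{finite,linorder} \<Rightarrow> 'n set \<Rightarrow> 'm set \<Rightarrow> real" where
  "minor A I J = (let r = sorted_list_of_set I; c = sorted_list_of_set J; k = card I in
     (\<Sum>p | p permutes {..<k}. of_int (sign p) * (\<Prod>a<k. A $ (r ! a) $ (c ! p a))))"

definition Lambda_abs :: "real^'m::{finite,linorder}^'n::{finite,linorder} \<Rightarrow> nat \<Rightarrow> real" where
  "Lambda_abs A k = Max ({\<bar>minor A I J\<bar> | I J. card I = k \<and> card J = k} \<union> {0})"

definition Fk :: "nat \<Rightarrow> (real^'m::{finite,linorder}) set \<Rightarrow> (real^'m::{finite,linorder} \<Rightarrow> real^'n::{finite,linorder}) \<Rightarrow> (real^'m::{finite,linorder} \<Rightarrow> real^'m::{finite,linorder}^'n::{finite,linorder}) \<Rightarrow> bool" where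
  "Fk k U f Df \<longleftrightarrow> W11 U f Df \<and> set_integrable lebesgue U (\<lambda>x. Lambda_abs (Df x) k)"

text \<open>Sign of the permutation putting the increasing list J followed by the increasing
  list L into increasing order, i.e. dx_J \<and> dx_L = shuffle_sign J L dx_{J \<union> L} for disjoint J, L.\<close>
definition shuffle_sign :: "'m::{finite,linorder} set \<Rightarrow> 'm set \<Rightarrow> real" where
  "shuffle_sign J L = (-1) ^ card {(j, l). j \<in> J \<and> l \<in> L \<and> l < j}"

text \<open>A k-form alpha on R^n is given by coefficients alpha I (y) for card I = k
  (alpha = sum over increasing I of alpha I dy_I); an (m-k)-form omega on U by
  coefficients omega L (x) for card L = m - k. The function below is the coefficient h of
  f^* alpha \<and> omega = h dx_1 \<and> ... \<and> dx_m.\<close>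
definition pullback_wedge :: "nat \<Rightarrow> (real^'m::{finite,linorder} \<Rightarrow> real^'n::{finite,linorder}) \<Rightarrow> (real^'m::{finite,linorder} \<Rightarrow> real^'m::{finite,linorder}^'n::{finite,linorder})
     \<Rightarrow> ('n set \<Rightarrow> real^'n::{finite,linorder} \<Rightarrow> real) \<Rightarrow> ('m set \<Rightarrow> real^'m::{finite,linorder} \<Rightarrow> real) \<Rightarrow> real^'m::{finite,linorder} \<Rightarrow> real" where
  "pullback_wedge k f Df \<alpha> \<omega> x =
     (\<Sum>I | card I = k. \<Sum>J | card J = k.
        \<alpha> I (f x) * minor (Df x) I J * shuffle_sign J (- J) * \<omega> (- J) x)"

definition C1b_form :: "nat \<Rightarrow> ('n::{finite,linorder} set \<Rightarrow> real^'n::{finite,linorder} \<Rightarrow> real) \<Rightarrow> bool" where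
  "C1b_form k \<alpha> \<longleftrightarrow> (\<forall>I. card I = k \<longrightarrow>
     C1_on UNIV (\<alpha> I) \<and> bounded (range (\<alpha> I)) \<and> (\<forall>i. bounded (range (pd i (\<alpha> I)))))"

definition C10_form :: "(real^'m::{finite,linorder}) set \<Rightarrow> nat \<Rightarrow> ('m set \<Rightarrow> real^'m::{finite,linorder} \<Rightarrow> real) \<Rightarrow> bool" where
  "C10_form U j \<omega> \<longleftrightarrow> (\<forall>L. card L = j \<longrightarrow> C1_on U (\<omega> L) \<and> compact_support_in U (\<omega> L))"

definition tau_conv :: "nat \<Rightarrow> (real^'m::{finite,linorder}) set \<Rightarrow> (nat \<Rightarrow> real^'m::{finite,linorder} \<Rightarrow> real^'n::{finite,linorder})
     \<Rightarrow> (nat \<Rightarrow> real^'m::{finite,linorder} \<Rightarrow> real^'m::{finite,linorder}^'n::{finite,linorder}) \<Rightarrow> (real^'m::{finite,linorder} \<Rightarrow> real^'n::{finite,linorder}) \<Rightarrow> (real^'m::{finite,linorder} \<Rightarrow> real^'m::{finite,linorder}^'n::{finite,linorder}) \<Rightarrow> bool" where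
  "tau_conv k U fs Dfs f Df \<longleftrightarrow>
     (\<forall>j. Fk k U (fs j) (Dfs j)) \<and> Fk k U f Df \<and>
     (\<lambda>j. W11_dist U (fs j) (Dfs j) f Df) \<longlonglongrightarrow> 0 \<and>
     (\<forall>\<alpha> \<omega>. C1b_form k \<alpha> \<longrightarrow> C10_form U (CARD('m) - k) \<omega> \<longrightarrow>
        (\<lambda>j. LINT x:U|lebesgue. pullback_wedge k (fs j) (Dfs j) \<alpha> \<omega> x)
          \<longlonglongrightarrow> (LINT x:U|lebesgue. pullback_wedge k f Df \<alpha> \<omega> x))"

definition stable :: "nat \<Rightarrow> (real^'m::{finite,linorder}) set \<Rightarrow> (real^'m::{finite,linorder} \<Rightarrow> real^'n::{finite,linorder}) \<Rightarrow> (real^'m::{finite,linorder} \<Rightarrow> real^'m::{finite,linorder}^'n::{finite,linorder}) \<Rightarrow> bool" where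
  "stable k U f Df \<longleftrightarrow> Fk k U f Df \<and>
     (\<exists>fs. (\<forall>j. C1_on U (fs j)) \<and> tau_conv k U fs (\<lambda>j x. jacobian (fs j) (at x)) f Df)"

end

theory Submission
  imports Defs
begin

(*
  If f_j are C^1 maps converging to f in W^{1,1}(U) and G = sup_j |Lambda^k f_j| is integrable,
  then a subsequence of (f_j) converges to f in the tau^k topology; hence f is k-stable.

  The argument is dominated convergence.  An L^1-convergent sequence has an a.e. convergent
  subsequence, so after passing to a subsequence f_j -> f and Df_j -> Df a.e. on U.  The
  coefficient of f_j^* alpha \<and> omega is a finite sum of terms (bounded coefficient of alpha)
  * (k x k minor of Df_j) * (bounded coefficient of omega), hence it is bounded by a constant
  times |Lambda^k f_j| <= G, and it converges a.e. because minors are continuous in the matrix.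
  The same domination, passed to the limit, gives |Lambda^k f| <= G, so all maps lie in F^k.
*)

text \<open>A minor is a polynomial in the matrix entries, hence continuous.\<close>

lemma minor_tendsto:
  assumes "(B \<longlongrightarrow> A) F"
  shows "((\<lambda>n. minor (B n) I J) \<longlongrightarrow> minor A I J) F"
  unfolding minor_def Let_def by (intro tendsto_intros assms)

lemma continuous_on_minor: "continuous_on UNIV (\<lambda>A. minor A I J)"
  unfolding minor_def Let_def by (intro continuous_intros)

lemma borel_measurable_minor [measurable]:
  "Df \<in> borel_measurable M \<Longrightarrow> (\<lambda>x. minor (Df x) I J) \<in> borel_measurable M"
  using measurable_comp[OF _ borel_measurable_continuous_onI[OF continuous_on_minor], of Df M]
  by (simp add: comp_def)

lemma finite_Lambda_abs_values:
  "finite ({\<bar>minor A I J\<bar> | I J. card I = k \<and> card J = k} \<union> {0})"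
proof -
  have "{\<bar>minor A I J\<bar> | I J. card I = k \<and> card J = k} \<subseteq> (\<lambda>(I, J). \<bar>minor A I J\<bar>) ` UNIV"
    by auto
  then show ?thesis by (simp add: finite_subset)
qed

lemma Lambda_abs_nonneg: "0 \<le> Lambda_abs A k"
  unfolding Lambda_abs_def using finite_Lambda_abs_values by (intro Max_ge) auto

lemma abs_minor_le_Lambda_abs:
  "card I = k \<Longrightarrow> card J = k \<Longrightarrow> \<bar>minor A I J\<bar> \<le> Lambda_abs A k"
  unfolding Lambda_abs_def using finite_Lambda_abs_values by (intro Max_ge) auto

lemma Lambda_abs_le:
  assumes "\<And>I J. card I = k \<Longrightarrow> card J = k \<Longrightarrow> \<bar>minor A I J\<bar> \<le> c" and "0 \<le> c"
  shows "Lambda_abs A k \<le> c"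
  unfolding Lambda_abs_def using finite_Lambda_abs_values assms by (subst Max_le_iff) auto

text \<open>The same maximum, indexed by a finite set, in the form required by
  \<open>borel_measurable_Max\<close>.\<close>

lemma Lambda_abs_as_Max:
  "Lambda_abs A k = Max ((\<lambda>i. case i of None \<Rightarrow> 0 | Some (I, J) \<Rightarrow> \<bar>minor A I J\<bar>)
                         ` insert None (Some ` {(I, J). card I = k \<and> card J = k}))"
  unfolding Lambda_abs_def by (rule arg_cong[where f = Max]) (auto simp: image_iff; blast)

lemma borel_measurable_Lambda_abs [measurable]:
  "Df \<in> borel_measurable M \<Longrightarrow> (\<lambda>x. Lambda_abs (Df x) k) \<in> borel_measurable M"
  unfolding Lambda_abs_as_Max
  by (rule borel_measurable_Max) (auto split: option.splits)

text \<open>A bound on \<open>Lambda_abs\<close> survives pointwise limits of the matrices; this is what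
  makes the limit map inherit the integrable domination.\<close>

lemma Lambda_abs_le_of_tendsto:
  assumes "A \<longlonglongrightarrow> A0" and "\<And>n. Lambda_abs (A n) k \<le> c"
  shows "Lambda_abs A0 k \<le> c"
proof (rule Lambda_abs_le)
  show "0 \<le> c" using Lambda_abs_nonneg assms(2) order_trans by blast
  show "\<bar>minor A0 I J\<bar> \<le> c" if IJ: "card I = k" "card J = k" for I J
  proof -
  have "(\<lambda>n. \<bar>minor (A n) I J\<bar>) \<longlonglongrightarrow> \<bar>minor A0 I J\<bar>"
    by (intro tendsto_rabs minor_tendsto assms(1))
  moreover have "\<bar>minor (A n) I J\<bar> \<le> c" for n
    using abs_minor_le_Lambda_abs[OF IJ] assms(2) order_trans by blast
  ultimately show ?thesis by (intro LIMSEQ_le_const2) auto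
  qed
qed

lemma C1_on_continuous: "C1_on U g \<Longrightarrow> continuous_on U g"
  unfolding C1_on_def
  by (auto intro!: continuous_at_imp_continuous_on differentiable_imp_continuous_within)

lemma bounded_image_compact_support:
  fixes g :: "real^'m::{finite,linorder} \<Rightarrow> real"
  assumes "C1_on U g" and "compact_support_in U g"
  shows "bounded (g ` U)"
proof -
  let ?S = "closure {x\<in>U. g x \<noteq> 0}"
  have S: "compact ?S" "?S \<subseteq> U" using assms(2) unfolding compact_support_in_def by auto
  have "compact (g ` ?S)"
    using S C1_on_continuous[OF assms(1)] by (blast intro: compact_continuous_image continuous_on_subset)
  moreover have "g ` U \<subseteq> insert 0 (g ` ?S)"
    using closure_subset by fastforce
  ultimately show ?thesis by (meson bounded_insert bounded_subset compact_imp_bounded)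
qed

lemma C1b_form_bound:
  assumes "C1b_form k \<alpha>"
  shows "\<exists>a\<ge>0. \<forall>I y. card I = k \<longrightarrow> \<bar>\<alpha> I y\<bar> \<le> a"
proof -
  have "bounded (\<Union>I\<in>{I. card I = k}. range (\<alpha> I))"
    using assms unfolding C1b_form_def by (intro bounded_UN) auto
  then obtain a where "a > 0" and "\<forall>v\<in>(\<Union>I\<in>{I. card I = k}. range (\<alpha> I)). \<bar>v\<bar> \<le> a"
    unfolding bounded_pos real_norm_def by blast
  then show ?thesis by (intro exI[of _ a]) auto
qed

lemma C10_form_bound:
  assumes "C10_form U j \<omega>"
  shows "\<exists>b\<ge>0. \<forall>L. \<forall>x\<in>U. card L = j \<longrightarrow> \<bar>\<omega> L x\<bar> \<le> b"
proof -
  have "bounded (\<Union>L\<in>{L. card L = j}. \<omega> L ` U)"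
    using assms bounded_image_compact_support unfolding C10_form_def by (intro bounded_UN) auto
  then obtain b where "b > 0" and "\<forall>v\<in>(\<Union>L\<in>{L. card L = j}. \<omega> L ` U). \<bar>v\<bar> \<le> b"
    unfolding bounded_pos real_norm_def by blast
  then show ?thesis by (intro exI[of _ b]) auto
qed

lemma card_Compl: "card (- (A::'a::finite set)) = CARD('a) - card A"
  by (metis Compl_eq_Diff_UNIV card_Diff_subset finite subset_UNIV)

lemma pullback_wedge_bound:
  fixes g :: "real^'m::{finite,linorder} \<Rightarrow> real^'n::{finite,linorder}"
  assumes "\<And>I. card I = k \<Longrightarrow> \<bar>\<alpha> I (g x)\<bar> \<le> a"
    and "\<And>J. card J = k \<Longrightarrow> \<bar>\<omega> (- J) x\<bar> \<le> b"
  shows "\<bar>pullback_wedge k g Dg \<alpha> \<omega> x\<bar>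
           \<le> real (card {I :: 'n set. card I = k} * card {J :: 'm set. card J = k})
              * (a * b * Lambda_abs (Dg x) k)"
proof -
  have term_bound: "\<bar>\<alpha> I (g x) * minor (Dg x) I J * shuffle_sign J (- J) * \<omega> (- J) x\<bar>
      \<le> a * b * Lambda_abs (Dg x) k" if I: "card I = k" and J: "card J = k" for I J
  proof -
    have "\<bar>\<alpha> I (g x) * minor (Dg x) I J * shuffle_sign J (- J) * \<omega> (- J) x\<bar>
        = \<bar>\<alpha> I (g x)\<bar> * \<bar>minor (Dg x) I J\<bar> * \<bar>\<omega> (- J) x\<bar>"
      by (simp add: abs_mult shuffle_sign_def)
    also have "\<dots> \<le> a * Lambda_abs (Dg x) k * b"
      using assms(1)[OF I] assms(2)[OF J] abs_minor_le_Lambda_abs[OF I J, of "Dg x"]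
      by (intro mult_mono) auto
    finally show ?thesis by (simp add: algebra_simps)
  qed
  have "\<bar>pullback_wedge k g Dg \<alpha> \<omega> x\<bar> \<le>
     (\<Sum>I | card I = k. \<Sum>J | card J = k.
        \<bar>\<alpha> I (g x) * minor (Dg x) I J * shuffle_sign J (- J) * \<omega> (- J) x\<bar>)"
    unfolding pullback_wedge_def by (rule order_trans[OF sum_abs sum_mono[OF sum_abs]])
  also have "\<dots> \<le> (\<Sum>I :: 'n set | card I = k. \<Sum>J :: 'm set | card J = k. a * b * Lambda_abs (Dg x) k)"
    by (intro sum_mono term_bound) simp_all
  also have "\<dots> = real (card {I :: 'n set. card I = k} * card {J :: 'm set. card J = k})
                    * (a * b * Lambda_abs (Dg x) k)"
    by simp
  finally show ?thesis .
qed

lemma pullback_wedge_dominated: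
  fixes \<omega> :: "'m::{finite,linorder} set \<Rightarrow> real^'m::{finite,linorder} \<Rightarrow> real"
    and \<alpha> :: "'n::{finite,linorder} set \<Rightarrow> real^'n::{finite,linorder} \<Rightarrow> real"
  assumes "C1b_form k \<alpha>" and "C10_form U (CARD('m) - k) \<omega>"
  shows "\<exists>C\<ge>0. \<forall>(g :: real^'m::{finite,linorder} \<Rightarrow> real^'n::{finite,linorder}) Dg. \<forall>x\<in>U.
           \<bar>pullback_wedge k g Dg \<alpha> \<omega> x\<bar> \<le> C * Lambda_abs (Dg x) k"
proof -
  obtain a where "a \<ge> 0" and a: "\<And>I y. card I = k \<Longrightarrow> \<bar>\<alpha> I y\<bar> \<le> a"
    using C1b_form_bound[OF assms(1)] by blast
  obtain b where "b \<ge> 0" and b: "\<And>L x. x \<in> U \<Longrightarrow> card L = CARD('m) - k \<Longrightarrow> \<bar>\<omega> L x\<bar> \<le> b"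
    using C10_form_bound[OF assms(2)] by blast
  define C where "C = real (card {I :: 'n set. card I = k} * card {J :: 'm set. card J = k}) * (a * b)"
  have "\<bar>pullback_wedge k g Dg \<alpha> \<omega> x\<bar> \<le> C * Lambda_abs (Dg x) k"
    if "x \<in> U" for g :: "real^'m::{finite,linorder} \<Rightarrow> real^'n::{finite,linorder}" and Dg x
  proof -
    have "\<bar>\<omega> (- J) x\<bar> \<le> b" if "card J = k" for J :: "'m set"
      using b[OF \<open>x \<in> U\<close>, of "- J"] that by (simp add: card_Compl)
    then show ?thesis
      using pullback_wedge_bound[of k \<alpha> g x a \<omega> b Dg] a unfolding C_def by (simp add: mult.assoc)
  qed
  moreover have "0 \<le> C" unfolding C_def using \<open>a \<ge> 0\<close> \<open>b \<ge> 0\<close> by simp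
  ultimately show ?thesis by blast
qed

lemma pullback_wedge_tendsto:
  assumes "\<And>I. card I = k \<Longrightarrow> continuous_on UNIV (\<alpha> I)"
    and "(\<lambda>n. g n x) \<longlonglongrightarrow> g0 x" and "(\<lambda>n. Dg n x) \<longlonglongrightarrow> Dg0 x"
  shows "(\<lambda>n. pullback_wedge k (g n) (Dg n) \<alpha> \<omega> x) \<longlonglongrightarrow> pullback_wedge k g0 Dg0 \<alpha> \<omega> x"
proof -
  have "(\<lambda>n. \<alpha> I (g n x)) \<longlonglongrightarrow> \<alpha> I (g0 x)" if "card I = k" for I
  proof -
    have "isCont (\<alpha> I) (g0 x)"
      using assms(1)[OF that] by (simp add: continuous_on_eq_continuous_at)
    then show ?thesis using assms(2) by (rule isCont_tendsto_compose)
  qed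
  then show ?thesis unfolding pullback_wedge_def
    by (intro tendsto_sum tendsto_mult tendsto_const minor_tendsto assms(3)) simp_all
qed

text \<open>Measurability of the coefficient on \<open>U\<close>: restricting to \<open>U\<close> commutes with the
  pull-back, so it suffices to know that the restricted \<open>g\<close>, \<open>Dg\<close> and \<open>\<omega>\<close> are measurable.\<close>

lemma indicator_pullback_wedge:
  "indicator U x * pullback_wedge k g Dg \<alpha> \<omega> x =
   pullback_wedge k (\<lambda>x. indicator U x *\<^sub>R g x) (\<lambda>x. indicator U x *\<^sub>R Dg x) \<alpha>
     (\<lambda>L x. indicator U x * \<omega> L x) x"
  unfolding pullback_wedge_def by (cases "x \<in> U") auto

lemma set_borel_measurable_pullback_wedge:
  assumes "open U"
    and g: "set_borel_measurable lebesgue U g" and Dg: "set_borel_measurable lebesgue U Dg"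
    and \<alpha>: "\<And>I. card I = k \<Longrightarrow> continuous_on UNIV (\<alpha> I)"
    and \<omega>: "\<And>L. card L = CARD('m) - k \<Longrightarrow> continuous_on U (\<omega> L)"
  shows "set_borel_measurable lebesgue U
           (pullback_wedge k (g :: real^'m::{finite,linorder} \<Rightarrow> real^'n::{finite,linorder}) Dg \<alpha> \<omega>)"
proof -
  have \<alpha>g: "(\<lambda>x. \<alpha> I (indicator U x *\<^sub>R g x)) \<in> borel_measurable lebesgue" if "card I = k" for I
    using measurable_comp[OF g[unfolded set_borel_measurable_def]
        borel_measurable_continuous_onI[OF \<alpha>[OF that]]]
    by (simp add: comp_def)
  have \<omega>U: "(\<lambda>x. indicator U x * \<omega> (- J) x) \<in> borel_measurable lebesgue" if "card J = k" for J
  proof -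
    have "(\<lambda>x. indicator U x *\<^sub>R \<omega> (- J) x) \<in> borel_measurable borel"
      using assms(1) \<omega>[of "- J"] that
      by (intro borel_measurable_continuous_on_indicator) (auto simp: card_Compl)
    then show ?thesis
      using measurable_comp[OF id_borel_measurable_lebesgue] by (auto simp: comp_def)
  qed
  show ?thesis
    unfolding set_borel_measurable_def real_scaleR_def indicator_pullback_wedge
    using Dg[unfolded set_borel_measurable_def]
    unfolding pullback_wedge_def
    by (intro borel_measurable_sum borel_measurable_times borel_measurable_const
          borel_measurable_minor \<alpha>g \<omega>U) simp_all
qed

lemma set_L1_tendsto_AE_subseq:
  fixes g :: "nat \<Rightarrow> 'a \<Rightarrow> 'b::{banach,second_countable_topology}"
  assumes "\<And>n. set_integrable M U (g n)" and "set_integrable M U g0"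
    and "(\<lambda>n. LINT x:U|M. norm (g n x - g0 x)) \<longlonglongrightarrow> 0"
  shows "\<exists>r. strict_mono r \<and> (AE x in M. x \<in> U \<longrightarrow> (\<lambda>n. g (r n) x) \<longlonglongrightarrow> g0 x)"
proof -
  define u where "u n x = indicator U x *\<^sub>R (g n x - g0 x)" for n x
  have "integrable M (u n)" for n
    using assms(1,2) unfolding u_def set_integrable_def by (simp add: scaleR_diff_right)
  moreover have "(\<lambda>n. \<integral>x. norm (u n x) \<partial>M) \<longlonglongrightarrow> 0"
    using assms(3) unfolding u_def set_lebesgue_integral_def by simp
  ultimately obtain r where r: "strict_mono r" "AE x in M. (\<lambda>n. u (r n) x) \<longlonglongrightarrow> 0"
    using tendsto_L1_AE_subseq by blast
  from r(2) have "AE x in M. x \<in> U \<longrightarrow> (\<lambda>n. g (r n) x) \<longlonglongrightarrow> g0 x"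
    by eventually_elim (auto simp: u_def LIM_zero_cancel)
  with r(1) show ?thesis by blast
qed

lemma W11_dist_tendsto_AE_subseq:
  assumes "\<And>j. set_integrable lebesgue U (g j)" and "\<And>j. set_integrable lebesgue U (Dg j)"
    and "set_integrable lebesgue U g0" and "set_integrable lebesgue U Dg0"
    and "(\<lambda>j. W11_dist U (g j) (Dg j) g0 Dg0) \<longlonglongrightarrow> 0"
  shows "\<exists>r. strict_mono r \<and> (AE x in lebesgue. x \<in> U \<longrightarrow>
               (\<lambda>j. g (r j) x) \<longlonglongrightarrow> g0 x \<and> (\<lambda>j. Dg (r j) x) \<longlonglongrightarrow> Dg0 x)"
proof -
  define A where "A j = (LINT x:U|lebesgue. norm (g j x - g0 x))" for j
  define B where "B j = (LINT x:U|lebesgue. norm (Dg j x - Dg0 x))" for j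
  have A0: "0 \<le> A j" and B0: "0 \<le> B j" for j
    unfolding A_def B_def set_lebesgue_integral_def by (auto intro!: integral_nonneg_AE)
  have AB: "(\<lambda>j. A j + B j) \<longlonglongrightarrow> 0"
    using assms(5) unfolding W11_dist_def A_def B_def .
  have "A \<longlonglongrightarrow> 0"
    by (rule tendsto_sandwich[OF _ _ tendsto_const AB]) (auto simp: A0 B0)
  then obtain r1 where r1: "strict_mono r1"
    and g_conv: "AE x in lebesgue. x \<in> U \<longrightarrow> (\<lambda>j. g (r1 j) x) \<longlonglongrightarrow> g0 x"
    using set_L1_tendsto_AE_subseq[of lebesgue U g g0] assms(1,3) unfolding A_def by blast
  have "B \<longlonglongrightarrow> 0"
    by (rule tendsto_sandwich[OF _ _ tendsto_const AB]) (auto simp: A0 B0)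
  then have "(\<lambda>j. B (r1 j)) \<longlonglongrightarrow> 0"
    using LIMSEQ_subseq_LIMSEQ[OF _ r1] by (simp add: comp_def)
  then obtain r2 where r2: "strict_mono r2"
    and Dg_conv: "AE x in lebesgue. x \<in> U \<longrightarrow> (\<lambda>j. Dg (r1 (r2 j)) x) \<longlonglongrightarrow> Dg0 x"
    using set_L1_tendsto_AE_subseq[of lebesgue U "\<lambda>j. Dg (r1 j)" Dg0] assms(2,4)
    unfolding B_def by blast
  from g_conv Dg_conv
  have "AE x in lebesgue. x \<in> U \<longrightarrow>
          (\<lambda>j. g ((r1 \<circ> r2) j) x) \<longlonglongrightarrow> g0 x \<and> (\<lambda>j. Dg ((r1 \<circ> r2) j) x) \<longlonglongrightarrow> Dg0 x"
    by eventually_elim (use LIMSEQ_subseq_LIMSEQ[OF _ r2] in \<open>auto simp: comp_def\<close>)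
  moreover have "strict_mono (r1 \<circ> r2)" using r1 r2 by (rule strict_mono_o)
  ultimately show ?thesis by blast
qed

lemma integrable_dominating_SUP:
  fixes h :: "nat \<Rightarrow> 'a \<Rightarrow> real"
  assumes [measurable]: "\<And>j. h j \<in> borel_measurable M" "U \<in> sets M"
    and nonneg: "\<And>j x. 0 \<le> h j x"
    and finite: "(\<integral>\<^sup>+x\<in>U. (SUP j. ennreal (h j x)) \<partial>M) < \<infinity>"
  shows "\<exists>w. integrable M w \<and> (AE x in M. x \<in> U \<longrightarrow> (\<forall>j. h j x \<le> w x))"
proof -
  define G where "G x = (SUP j. ennreal (h j x)) * indicator U x" for x
  have G_meas [measurable]: "G \<in> borel_measurable M" unfolding G_def by measurable
  have G_finite: "AE x in M. G x \<noteq> \<infinity>"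
    using nn_integral_PInf_AE[OF G_meas] finite unfolding G_def by auto
  define w where "w x = enn2real (G x)" for x
  have "integrable M w"
  proof (rule integrableI_nonneg)
    show "w \<in> borel_measurable M" unfolding w_def by measurable
    show "AE x in M. 0 \<le> w x" unfolding w_def by simp
    have "(\<integral>\<^sup>+x. ennreal (w x) \<partial>M) \<le> (\<integral>\<^sup>+x. G x \<partial>M)"
      unfolding w_def by (intro nn_integral_mono) (simp add: ennreal_enn2real_if)
    then show "(\<integral>\<^sup>+x. ennreal (w x) \<partial>M) < \<infinity>" using finite unfolding G_def by simp
  qed
  moreover from G_finite have "AE x in M. x \<in> U \<longrightarrow> (\<forall>j. h j x \<le> w x)"
  proof eventually_elim
    case (elim x)
    show ?case
    proof (intro impI allI)
      fix j assume "x \<in> U"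
      then have "ennreal (h j x) \<le> G x" unfolding G_def by (auto intro: SUP_upper)
      then have "enn2real (ennreal (h j x)) \<le> w x"
        unfolding w_def using elim by (intro enn2real_mono) (auto simp: top.not_eq_extremum)
      then show "h j x \<le> w x" using nonneg by simp
    qed
  qed
  ultimately show ?thesis by blast
qed

lemma set_borel_measurable_if_set_integrable:
  "set_integrable M A f \<Longrightarrow> set_borel_measurable M A f"
  unfolding set_integrable_def set_borel_measurable_def by (rule borel_measurable_integrable)

lemma integrable_dominating_Lambda_abs:
  fixes Dg :: "nat \<Rightarrow> 'a \<Rightarrow> real^'m::{finite,linorder}^'n::{finite,linorder}"
  assumes "U \<in> sets M" and Dg: "\<And>j. set_borel_measurable M U (Dg j)"
    and finite: "(\<integral>\<^sup>+x\<in>U. (SUP j. ennreal (Lambda_abs (Dg j x) k)) \<partial>M) < \<infinity>"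
  shows "\<exists>w. integrable M w \<and> (AE x in M. x \<in> U \<longrightarrow> (\<forall>j. Lambda_abs (Dg j x) k \<le> w x))"
proof -
  define h where "h j x = Lambda_abs (indicator U x *\<^sub>R Dg j x) k" for j x
  have "h j \<in> borel_measurable M" for j
    using Dg[of j] unfolding h_def set_borel_measurable_def by simp
  moreover have "(\<integral>\<^sup>+x\<in>U. (SUP j. ennreal (h j x)) \<partial>M)
                  = (\<integral>\<^sup>+x\<in>U. (SUP j. ennreal (Lambda_abs (Dg j x) k)) \<partial>M)"
    by (intro nn_integral_cong) (auto simp: h_def indicator_def)
  ultimately obtain w where "integrable M w" and "AE x in M. x \<in> U \<longrightarrow> (\<forall>j. h j x \<le> w x)"
    using integrable_dominating_SUP[of h M U] assms(1) finite Lambda_abs_nonneg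
    unfolding h_def by (metis (no_types, lifting))
  then show ?thesis unfolding h_def by (auto elim!: AE_mp)
qed

lemma Fk_of_dominated:
  assumes W: "W11 U g Dg" and [measurable]: "U \<in> sets lebesgue"
    and w: "integrable lebesgue w"
    and dom: "AE x in lebesgue. x \<in> U \<longrightarrow> Lambda_abs (Dg x) k \<le> w x"
  shows "Fk k U g Dg"
  unfolding Fk_def set_integrable_def
proof (intro conjI W Bochner_Integration.integrable_bound[OF w])
  have "(\<lambda>x. indicator U x *\<^sub>R Dg x) \<in> borel_measurable lebesgue"
    using W unfolding W11_def set_integrable_def by auto
  moreover have "(\<lambda>x. indicator U x *\<^sub>R Lambda_abs (Dg x) k)
      = (\<lambda>x. indicator U x * Lambda_abs (indicator U x *\<^sub>R Dg x) k)"
    by (auto simp: fun_eq_iff indicator_def)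
  ultimately show "(\<lambda>x. indicator U x *\<^sub>R Lambda_abs (Dg x) k) \<in> borel_measurable lebesgue"
    by simp
  show "AE x in lebesgue. norm (indicator U x *\<^sub>R Lambda_abs (Dg x) k) \<le> norm (w x)"
    using dom by eventually_elim (auto simp: indicator_def Lambda_abs_nonneg)
qed

lemma pullback_wedge_integral_tendsto:
  fixes g :: "nat \<Rightarrow> real^'m::{finite,linorder} \<Rightarrow> real^'n::{finite,linorder}"
  assumes "open U"
    and g: "\<And>j. set_borel_measurable lebesgue U (g j)"
    and Dg: "\<And>j. set_borel_measurable lebesgue U (Dg j)"
    and g0: "set_borel_measurable lebesgue U g0" and Dg0: "set_borel_measurable lebesgue U Dg0"
    and conv: "AE x in lebesgue. x \<in> U \<longrightarrow> (\<lambda>j. g j x) \<longlonglongrightarrow> g0 x \<and> (\<lambda>j. Dg j x) \<longlonglongrightarrow> Dg0 x"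
    and w: "integrable lebesgue w"
    and dom: "AE x in lebesgue. x \<in> U \<longrightarrow> (\<forall>j. Lambda_abs (Dg j x) k \<le> w x)"
    and \<alpha>: "C1b_form k \<alpha>" and \<omega>: "C10_form U (CARD('m) - k) \<omega>"
  shows "(\<lambda>j. LINT x:U|lebesgue. pullback_wedge k (g j) (Dg j) \<alpha> \<omega> x)
           \<longlonglongrightarrow> (LINT x:U|lebesgue. pullback_wedge k g0 Dg0 \<alpha> \<omega> x)"
proof -
  have \<alpha>_cont: "\<And>I. card I = k \<Longrightarrow> continuous_on UNIV (\<alpha> I)"
    using \<alpha> unfolding C1b_form_def by (auto intro: C1_on_continuous)
  have \<omega>_cont: "\<And>L. card L = CARD('m) - k \<Longrightarrow> continuous_on U (\<omega> L)"
    using \<omega> unfolding C10_form_def by (auto intro: C1_on_continuous)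
  obtain C where "0 \<le> C" and pw_bound: "\<And>j x. x \<in> U \<Longrightarrow>
      \<bar>pullback_wedge k (g j) (Dg j) \<alpha> \<omega> x\<bar> \<le> C * Lambda_abs (Dg j x) k"
    using pullback_wedge_dominated[OF \<alpha> \<omega>] by blast
  have restricted_meas: "(\<lambda>x. indicator U x *\<^sub>R pullback_wedge k g' Dg' \<alpha> \<omega> x) \<in> borel_measurable lebesgue"
    if "set_borel_measurable lebesgue U g'" "set_borel_measurable lebesgue U Dg'" for g' Dg'
    using set_borel_measurable_pullback_wedge[OF \<open>open U\<close> that \<alpha>_cont \<omega>_cont]
    unfolding set_borel_measurable_def .
  define s where "s j x = indicator U x *\<^sub>R pullback_wedge k (g j) (Dg j) \<alpha> \<omega> x" for j x
  have "(\<lambda>j. integral\<^sup>L lebesgue (s j))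
          \<longlonglongrightarrow> integral\<^sup>L lebesgue (\<lambda>x. indicator U x *\<^sub>R pullback_wedge k g0 Dg0 \<alpha> \<omega> x)"
  proof (rule integral_dominated_convergence[where w = "\<lambda>x. C * \<bar>w x\<bar>"])
    show "(\<lambda>x. indicator U x *\<^sub>R pullback_wedge k g0 Dg0 \<alpha> \<omega> x) \<in> borel_measurable lebesgue"
      "s j \<in> borel_measurable lebesgue" for j
      unfolding s_def by (intro restricted_meas g Dg g0 Dg0)+
    show "integrable lebesgue (\<lambda>x. C * \<bar>w x\<bar>)" using w by simp
    show "AE x in lebesgue. (\<lambda>j. s j x) \<longlonglongrightarrow> indicator U x *\<^sub>R pullback_wedge k g0 Dg0 \<alpha> \<omega> x"
      using conv
    proof eventually_elim
      case (elim x)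
      show ?case
      proof (cases "x \<in> U")
        case True
        then have "(\<lambda>j. pullback_wedge k (g j) (Dg j) \<alpha> \<omega> x) \<longlonglongrightarrow> pullback_wedge k g0 Dg0 \<alpha> \<omega> x"
          using elim by (intro pullback_wedge_tendsto[OF \<alpha>_cont]) auto
        then show ?thesis using True by (simp add: s_def)
      qed (simp add: s_def)
    qed
    show "AE x in lebesgue. norm (s j x) \<le> C * \<bar>w x\<bar>" for j
      using dom
    proof eventually_elim
      case (elim x)
      show ?case
      proof (cases "x \<in> U")
        case True
        have "\<bar>pullback_wedge k (g j) (Dg j) \<alpha> \<omega> x\<bar> \<le> C * Lambda_abs (Dg j x) k"
          using pw_bound[OF True] .
        also have "\<dots> \<le> C * \<bar>w x\<bar>"
          using elim True \<open>0 \<le> C\<close> by (intro mult_left_mono) (auto intro: order_trans[OF _ abs_ge_self])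
        finally show ?thesis using True by (simp add: s_def)
      qed (simp add: s_def \<open>0 \<le> C\<close>)
    qed
  qed
  then show ?thesis unfolding s_def set_lebesgue_integral_def .
qed

lemma tau_conv_subseq_of_dominated:
  fixes g :: "nat \<Rightarrow> real^'m::{finite,linorder} \<Rightarrow> real^'n::{finite,linorder}"
  assumes "open U" and W: "W11 U f Df" and Wg: "\<And>j. W11 U (g j) (Dg j)"
    and W11_lim: "(\<lambda>j. W11_dist U (g j) (Dg j) f Df) \<longlonglongrightarrow> 0"
    and sup_finite: "(\<integral>\<^sup>+x\<in>U. (SUP j. ennreal (Lambda_abs (Dg j x) k)) \<partial>lebesgue) < \<infinity>"
  shows "\<exists>r. strict_mono r \<and> tau_conv k U (\<lambda>j. g (r j)) (\<lambda>j. Dg (r j)) f Df"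
proof -
  have U: "U \<in> sets lebesgue" using \<open>open U\<close> by simp
  have int: "\<And>j. set_integrable lebesgue U (g j)" "\<And>j. set_integrable lebesgue U (Dg j)"
    "set_integrable lebesgue U f" "set_integrable lebesgue U Df"
    using Wg W unfolding W11_def by auto
  note meas = int[THEN set_borel_measurable_if_set_integrable]
  obtain r where r: "strict_mono r" and conv: "AE x in lebesgue. x \<in> U \<longrightarrow>
      (\<lambda>j. g (r j) x) \<longlonglongrightarrow> f x \<and> (\<lambda>j. Dg (r j) x) \<longlonglongrightarrow> Df x"
    using W11_dist_tendsto_AE_subseq[OF int W11_lim] by blast
  obtain w where w: "integrable lebesgue w"
    and dom: "AE x in lebesgue. x \<in> U \<longrightarrow> (\<forall>j. Lambda_abs (Dg j x) k \<le> w x)"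
    using integrable_dominating_Lambda_abs[OF U meas(2) sup_finite] by blast
  have dom_r: "AE x in lebesgue. x \<in> U \<longrightarrow> (\<forall>j. Lambda_abs (Dg (r j) x) k \<le> w x)"
    using dom by eventually_elim blast
  have dom_f: "AE x in lebesgue. x \<in> U \<longrightarrow> Lambda_abs (Df x) k \<le> w x"
    using conv dom_r by eventually_elim (blast intro: Lambda_abs_le_of_tendsto)
  have "tau_conv k U (\<lambda>j. g (r j)) (\<lambda>j. Dg (r j)) f Df"
    unfolding tau_conv_def
  proof (intro conjI allI impI)
    show "Fk k U (g (r j)) (Dg (r j))" for j
      using dom_r by (intro Fk_of_dominated[OF Wg U w]) (auto elim!: AE_mp)
    show "Fk k U f Df" using Fk_of_dominated[OF W U w dom_f] .
    show "(\<lambda>j. W11_dist U (g (r j)) (Dg (r j)) f Df) \<longlonglongrightarrow> 0"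
      using LIMSEQ_subseq_LIMSEQ[OF W11_lim r] by (simp add: comp_def)
    show "(\<lambda>j. LINT x:U|lebesgue. pullback_wedge k (g (r j)) (Dg (r j)) \<alpha> \<omega> x)
            \<longlonglongrightarrow> (LINT x:U|lebesgue. pullback_wedge k f Df \<alpha> \<omega> x)"
      if "C1b_form k \<alpha>" and "C10_form U (CARD('m) - k) \<omega>" for \<alpha> \<omega>
      using pullback_wedge_integral_tendsto[OF \<open>open U\<close> meas(1,2) meas(3,4) conv w dom_r that] .
  qed
  with r show ?thesis by blast
qed

theorem mainTheorem6:
  fixes U :: "(real^'m::{finite,linorder}) set"
    and f :: "real^'m::{finite,linorder} \<Rightarrow> real^'n::{finite,linorder}"
    and Df :: "real^'m::{finite,linorder} \<Rightarrow> real^'m::{finite,linorder}^'n::{finite,linorder}"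
    and k :: nat
  assumes "open U" and "connected U" and "bounded U" and "U \<noteq> {}"
    and "W11 U f Df"
    and "\<exists>fs. (\<forall>j. C1_on U (fs j) \<and> W11 U (fs j) (\<lambda>x. jacobian (fs j) (at x))) \<and>
           (\<lambda>j. W11_dist U (fs j) (\<lambda>x. jacobian (fs j) (at x)) f Df) \<longlonglongrightarrow> 0 \<and>
           (\<integral>\<^sup>+x\<in>U. (SUP j. ennreal (Lambda_abs (jacobian (fs j) (at x)) k)) \<partial>lebesgue) < \<infinity>"
  shows "stable k U f Df"
proof -
  obtain fs where C1: "\<And>j. C1_on U (fs j)"
    and W: "\<And>j. W11 U (fs j) (\<lambda>x. jacobian (fs j) (at x))"
    and W11_lim: "(\<lambda>j. W11_dist U (fs j) (\<lambda>x. jacobian (fs j) (at x)) f Df) \<longlonglongrightarrow> 0"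
    and sup_finite: "(\<integral>\<^sup>+x\<in>U. (SUP j. ennreal (Lambda_abs (jacobian (fs j) (at x)) k)) \<partial>lebesgue) < \<infinity>"
    using assms(6) by blast
  obtain r where tau: "tau_conv k U (\<lambda>j. fs (r j)) (\<lambda>j x. jacobian (fs (r j)) (at x)) f Df"
    using tau_conv_subseq_of_dominated[OF \<open>open U\<close> assms(5) W W11_lim sup_finite] by blast
  then have "Fk k U f Df" unfolding tau_conv_def by (elim conjE)
  then show ?thesis
    unfolding stable_def by (intro conjI exI[of _ "\<lambda>j. fs (r j)"] allI C1 tau)
qed

end
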